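(* For every preference profile $p\in\mathcal P$, $M(p)=D_{\mu(p)}(p)$.
   Context: Let $n,h\ge2$, $N=\{1,\dots,n\}$ the alternatives, $H=\{1,\dots,h\}$ the individuals. A preference profile is an $h$-tuple $p=(p_1,\dots,p_h)$ of linear orders on $N$; $\mathcal P$ is the set of profiles; $x>_{p_i}y$ means $x\ne y$ and $x$ is ranked above $y$ by $p_i$. The Minimax SCC is $M(p)=\mathrm{argmin}_{x\in N}\max_{y\in N\setminus\{x\}}|\{i\in H: y>_{p_i}x\}|$. A majority threshold is an integer $\mu$ with $h/2<\mu\le h$. For such $\mu$, $D_\mu(p)=\{x\in N:\ \forall y\in N,\ |\{i\in H: y>_{p_i}x\}|<\mu\}$. Define $\mu(p)=\min\{\mu\in\mathbb N\cap(h/2,h]: D_\mu(p)\neq\varnothing\}$ (this set of thresholds is nonempty). *)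

theory Defs
  imports Main
begin

(* Alternatives N = {1..n}, individuals H = {1..h}.
   A linear order is a relation r with (x,y) \<in> r meaning "x is ranked at most as high as y",
   i.e. y is weakly above x. *)

definition profile :: "nat \<Rightarrow> nat \<Rightarrow> (nat \<Rightarrow> (nat \<times> nat) set) \<Rightarrow> bool" where
  "profile n h p \<longleftrightarrow> (\<forall>i\<in>{1..h}. linear_order_on {1..n} (p i))"

definition prefers :: "(nat \<times> nat) set \<Rightarrow> nat \<Rightarrow> nat \<Rightarrow> bool" where
  "prefers r y x \<longleftrightarrow> y \<noteq> x \<and> (x, y) \<in> r"

definition support :: "nat \<Rightarrow> (nat \<Rightarrow> (nat \<times> nat) set) \<Rightarrow> nat \<Rightarrow> nat \<Rightarrow> nat" where
  "support h p y x = card {i \<in> {1..h}. prefers (p i) y x}"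

definition max_defeat :: "nat \<Rightarrow> nat \<Rightarrow> (nat \<Rightarrow> (nat \<times> nat) set) \<Rightarrow> nat \<Rightarrow> nat" where
  "max_defeat n h p x = Max ((\<lambda>y. support h p y x) ` ({1..n} - {x}))"

definition minimax :: "nat \<Rightarrow> nat \<Rightarrow> (nat \<Rightarrow> (nat \<times> nat) set) \<Rightarrow> nat set" where
  "minimax n h p = {x \<in> {1..n}. \<forall>z\<in>{1..n}. max_defeat n h p x \<le> max_defeat n h p z}"

definition is_threshold :: "nat \<Rightarrow> nat \<Rightarrow> bool" where
  "is_threshold h \<mu> \<longleftrightarrow> h < 2 * \<mu> \<and> \<mu> \<le> h"

definition D :: "nat \<Rightarrow> nat \<Rightarrow> (nat \<Rightarrow> (nat \<times> nat) set) \<Rightarrow> nat \<Rightarrow> nat set" where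
  "D n h p \<mu> = {x \<in> {1..n}. \<forall>y\<in>{1..n}. support h p y x < \<mu>}"

definition mu_p :: "nat \<Rightarrow> nat \<Rightarrow> (nat \<Rightarrow> (nat \<times> nat) set) \<Rightarrow> nat" where
  "mu_p n h p = (LEAST \<mu>. is_threshold h \<mu> \<and> D n h p \<mu> \<noteq> {})"

end

theory Submission
  imports Defs
begin

text \<open>Let \<open>m\<close> be the minimax score, i.e. the least maximal defeat. The top alternative of any
  single voter is never beaten unanimously, so \<open>m < h\<close>, and hence \<open>\<mu>(p) = max (m + 1) (\<lfloor>h/2\<rfloor> + 1)\<close>.
  If \<open>\<mu>(p) = m + 1\<close> the two sets agree by definition. Otherwise \<open>m < \<lfloor>h/2\<rfloor>\<close>; since the supports
  of \<open>x\<close> over \<open>y\<close> and of \<open>y\<close> over \<open>x\<close> add up to \<open>h\<close>, any two distinct alternatives have maximal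
  defeats summing to at least \<open>h\<close>, so every alternative other than a minimax winner has maximal
  defeat above \<open>\<lfloor>h/2\<rfloor>\<close> and lies outside \<open>D n h p \<mu>(p)\<close>.\<close>

lemma finite_linear_order_on_has_top:
  assumes "finite A" "A \<noteq> {}" "linear_order_on A r"
  shows "\<exists>t\<in>A. \<forall>y\<in>A. \<not> prefers r y t"
proof -
  have "r \<subseteq> A \<times> A"
    using assms(3) by (simp add: order_on_defs)
  then have "finite (r - Id)"
    using assms(1) by (meson Diff_subset finite_SigmaI finite_subset subset_trans)
  then have "wf ((r - Id)\<inverse>)"
    using finite_acyclic_wf_converse linear_order_on_acyclic[OF assms(3)] by blast
  then obtain t where "t \<in> A" "\<And>y. (y, t) \<in> (r - Id)\<inverse> \<Longrightarrow> y \<notin> A"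
    using wfE_min' assms(2) by metis
  then show ?thesis
    unfolding prefers_def by auto
qed

lemma support_self [simp]: "support h p x x = 0"
  by (simp add: support_def prefers_def)

lemma support_add_support_swap:
  assumes "profile n h p" "x \<in> {1..n}" "y \<in> {1..n}" "x \<noteq> y"
  shows "support h p y x + support h p x y = h"
proof -
  define S where "S = {i \<in> {1..h}. prefers (p i) y x}"
  have "prefers (p i) x y \<longleftrightarrow> \<not> prefers (p i) y x" if "i \<in> {1..h}" for i
    using assms that unfolding profile_def prefers_def order_on_defs total_on_def antisym_def
    by blast
  then have "{i \<in> {1..h}. prefers (p i) x y} = {1..h} - S"
    unfolding S_def by blast
  moreover have "S \<subseteq> {1..h}"
    unfolding S_def by blast
  ultimately have "support h p x y = card {1..h} - card S"
    unfolding support_def by (simp add: card_Diff_subset finite_subset)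
  moreover have "card S \<le> card {1..h}"
    using \<open>S \<subseteq> {1..h}\<close> by (intro card_mono) simp_all
  ultimately show ?thesis
    unfolding support_def S_def[symmetric] by simp
qed

lemma support_le_max_defeat:
  assumes "y \<in> {1..n}" "y \<noteq> x"
  shows "support h p y x \<le> max_defeat n h p x"
  unfolding max_defeat_def using assms by (intro Max_ge) auto

lemma max_defeat_less_iff:
  assumes "n \<ge> 2" "x \<in> {1..n}"
  shows "max_defeat n h p x < \<mu> \<longleftrightarrow> (\<forall>y\<in>{1..n}. support h p y x < \<mu>)"
proof -
  have "1 \<in> {1..n}" "2 \<in> {1..n}"
    using assms(1) by auto
  then have "\<exists>y\<in>{1..n}. y \<noteq> x"
    by (metis numeral_One numeral_eq_iff semiring_norm(85))
  then have "{1..n} - {x} \<noteq> {}"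
    by blast
  then have "max_defeat n h p x < \<mu> \<longleftrightarrow> (\<forall>y\<in>{1..n} - {x}. support h p y x < \<mu>)"
    unfolding max_defeat_def by simp
  also have "\<dots> \<longleftrightarrow> (\<forall>y\<in>{1..n}. support h p y x < \<mu>)"
  proof
    assume less: "\<forall>y\<in>{1..n} - {x}. support h p y x < \<mu>"
    then have "0 < \<mu>"
      using \<open>{1..n} - {x} \<noteq> {}\<close> by fastforce
    with less show "\<forall>y\<in>{1..n}. support h p y x < \<mu>"
      by (metis DiffI singletonD support_self)
  qed auto
  finally show ?thesis .
qed

lemma D_eq_max_defeat_less:
  assumes "n \<ge> 2"
  shows "D n h p \<mu> = {x \<in> {1..n}. max_defeat n h p x < \<mu>}"
  unfolding D_def using max_defeat_less_iff[OF assms] by auto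

lemma max_defeat_add_max_defeat_ge:
  assumes "profile n h p" "x \<in> {1..n}" "y \<in> {1..n}" "x \<noteq> y"
  shows "h \<le> max_defeat n h p x + max_defeat n h p y"
  using support_add_support_swap[OF assms] support_le_max_defeat[of x n y h p]
    support_le_max_defeat[of y n x h p] assms(2-4) by linarith

lemma exists_max_defeat_less:
  assumes "n \<ge> 2" "h \<ge> 1" "profile n h p"
  shows "\<exists>t\<in>{1..n}. max_defeat n h p t < h"
proof -
  obtain t where t: "t \<in> {1..n}" "\<forall>y\<in>{1..n}. \<not> prefers (p 1) y t"
    using finite_linear_order_on_has_top[of "{1..n}" "p 1"] assms
    unfolding profile_def by auto
  have "support h p y t < h" if "y \<in> {1..n}" for y
  proof -
    have "i \<in> {2..h}" if "i \<in> {1..h}" "prefers (p i) y t" for i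
      using t(2) \<open>y \<in> {1..n}\<close> that by (cases "i = 1") auto
    then have "{i \<in> {1..h}. prefers (p i) y t} \<subseteq> {2..h}"
      by blast
    then have "support h p y t \<le> card {2..h}"
      unfolding support_def by (intro card_mono) auto
    then show ?thesis
      using assms(2) by simp
  qed
  then show ?thesis
    using max_defeat_less_iff[OF assms(1) t(1)] t(1) by blast
qed

definition minimax_score :: "nat \<Rightarrow> nat \<Rightarrow> (nat \<Rightarrow> (nat \<times> nat) set) \<Rightarrow> nat" where
  "minimax_score n h p = Min (max_defeat n h p ` {1..n})"

lemma minimax_score_le:
  "x \<in> {1..n} \<Longrightarrow> minimax_score n h p \<le> max_defeat n h p x"
  unfolding minimax_score_def by simp

lemma minimax_score_attained:
  assumes "n \<ge> 1"
  obtains x where "x \<in> {1..n}" "max_defeat n h p x = minimax_score n h p"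
  using Min_in[of "max_defeat n h p ` {1..n}"] assms unfolding minimax_score_def by fastforce

lemma minimax_eq_max_defeat_le:
  assumes "n \<ge> 1"
  shows "minimax n h p = {x \<in> {1..n}. max_defeat n h p x \<le> minimax_score n h p}"
  using minimax_score_le minimax_score_attained[OF assms]
  unfolding minimax_def by (metis (lifting) order_trans)

lemma mu_p_eq:
  assumes "n \<ge> 2" "h \<ge> 1" "profile n h p"
  shows "mu_p n h p = max (minimax_score n h p + 1) (h div 2 + 1)"
  unfolding mu_p_def
proof (rule Least_equality)
  obtain x where "x \<in> {1..n}" "max_defeat n h p x = minimax_score n h p"
    using minimax_score_attained assms(1) by (metis one_le_numeral order_trans)
  moreover have "minimax_score n h p < h"
    using exists_max_defeat_less[OF assms] minimax_score_le le_less_trans by blast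
  ultimately show "is_threshold h (max (minimax_score n h p + 1) (h div 2 + 1)) \<and>
      D n h p (max (minimax_score n h p + 1) (h div 2 + 1)) \<noteq> {}"
    unfolding is_threshold_def D_eq_max_defeat_less[OF assms(1)] using assms(2) by auto
next
  fix \<mu> assume \<mu>: "is_threshold h \<mu> \<and> D n h p \<mu> \<noteq> {}"
  then have "minimax_score n h p < \<mu>"
    unfolding D_eq_max_defeat_less[OF assms(1)] using minimax_score_le le_less_trans by blast
  moreover have "h div 2 < \<mu>"
    using \<mu> unfolding is_threshold_def by linarith
  ultimately show "max (minimax_score n h p + 1) (h div 2 + 1) \<le> \<mu>"
    by simp
qed

theorem proposition1:
  fixes n h :: nat and p :: "nat \<Rightarrow> (nat \<times> nat) set"
  assumes "n \<ge> 2" and "h \<ge> 2" and "profile n h p"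
  shows "minimax n h p = D n h p (mu_p n h p)"
proof -
  define m where "m = minimax_score n h p"
  obtain x\<^sub>0 where x\<^sub>0: "x\<^sub>0 \<in> {1..n}" "max_defeat n h p x\<^sub>0 = m"
    using minimax_score_attained assms(1) unfolding m_def by (metis one_le_numeral order_trans)
  have "max_defeat n h p x \<le> m"
    if "x \<in> {1..n}" "max_defeat n h p x < max (m + 1) (h div 2 + 1)" for x
  proof (cases "x = x\<^sub>0")
    case False
    then show ?thesis
      using max_defeat_add_max_defeat_ge[OF assms(3) that(1) x\<^sub>0(1)] x\<^sub>0(2) that(2) by linarith
  qed (use x\<^sub>0 in simp)
  then have "{x \<in> {1..n}. max_defeat n h p x \<le> m} =
      {x \<in> {1..n}. max_defeat n h p x < max (m + 1) (h div 2 + 1)}"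
    by fastforce
  then show ?thesis
    using assms by (simp add: minimax_eq_max_defeat_le D_eq_max_defeat_less mu_p_eq m_def)
qed

end
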